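(* Fix $I_{ij},I_{jk},I_{ki}\in[0,\infty)$. Define $\rho_H:\mathbb{R}^3_{>0}\to\mathbb{R}^3_{>0}$ by $$\rho_H(r_i,r_j,r_k)=(l_{ij},l_{jk},l_{ki}),$$ where $l_{ij},l_{jk},l_{ki}>0$ are given by $$\cosh l_{ij}=\cosh r_i\cosh r_j+I_{ij}\sinh r_i\sinh r_j,$$ $$\cosh l_{jk}=\cosh r_j\cosh r_k+I_{jk}\sinh r_j\sinh r_k,$$ $$\cosh l_{ki}=\cosh r_k\cosh r_i+I_{ki}\sinh r_k\sinh r_i.$$ Then $\rho_H$ is injective, and it is a smooth embedding. Equivalently, for a fixed hyperbolic triangle there is at most one configuration of three circles, centered at its vertices, whose pairwise inversive distances are $I_{ij},I_{jk},I_{ki}$.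
   Context: The inversive distance of two hyperbolic circles of radii $r_1,r_2$ whose centers are at distance $l$ is $$\frac{\cosh l-\cosh r_1\cosh r_2}{\sinh r_1\sinh r_2}.$$ *)

theory Defs
  imports "HOL-Analysis.Analysis"
begin

text \<open>Positive octant of R^3. Coordinates 1,2,3 correspond to i,j,k.\<close>
definition pos3 :: "(real^3) set" where
  "pos3 = {x. \<forall>i. 0 < x $ i}"

definition rhoH :: "real \<Rightarrow> real \<Rightarrow> real \<Rightarrow> real^3 \<Rightarrow> real^3" where
  "rhoH Iij Ijk Iki r = vector
     [arcosh (cosh (r$1) * cosh (r$2) + Iij * sinh (r$1) * sinh (r$2)),
      arcosh (cosh (r$2) * cosh (r$3) + Ijk * sinh (r$2) * sinh (r$3)),
      arcosh (cosh (r$3) * cosh (r$1) + Iki * sinh (r$3) * sinh (r$1))]"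

fun iter_dderiv :: "('a::real_normed_vector) list \<Rightarrow> ('a \<Rightarrow> 'b::real_normed_vector) \<Rightarrow> 'a \<Rightarrow> 'b" where
  "iter_dderiv [] f = f"
| "iter_dderiv (v # vs) f = (\<lambda>x. frechet_derivative (iter_dderiv vs f) (at x) v)"

definition smooth_on :: "'a set \<Rightarrow> ('a::real_normed_vector \<Rightarrow> 'b::real_normed_vector) \<Rightarrow> bool" where
  "smooth_on S f \<longleftrightarrow> (\<forall>vs. \<forall>x\<in>S. iter_dderiv vs f differentiable (at x))"

definition smooth_embedding :: "'a set \<Rightarrow> ('a::real_normed_vector \<Rightarrow> 'b::real_normed_vector) \<Rightarrow> bool" where
  "smooth_embedding S f \<longleftrightarrow> open S \<and> smooth_on S f \<and>
     (\<forall>x\<in>S. inj (frechet_derivative f (at x))) \<and>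
     (\<exists>g. homeomorphism S (f ` S) f g)"

end

theory Submission
  imports Defs
begin

(* Write F_I(a,b) = cosh a cosh b + I sinh a sinh b, so that the components of rho_H are
   arcosh F_I(r_i,r_j) for the three edges ij, jk, ki of a triangle.  For I >= 0 the function
   F_I is strictly increasing in each argument on [0,oo).  Hence if two radius vectors r, r'
   give the same edge, the changes r'_i - r_i and r'_j - r_j have opposite signs; around the
   odd cycle i -> j -> k -> i this forces all changes to vanish (lemma cyclic_sign).  The same
   sign argument, applied to the linear equations P dr_i + Q dr_j = 0 with P, Q > 0 that
   describe the kernel of the differential, shows that rho_H is an immersion.

   Smoothness is obtained from a small language of expressions (constants, coordinates,
   sums, products, cosh, sinh, inverse, sqrt, arcosh) which is closed under symbolic
   directional differentiation; every map whose components are such expressions is C^oo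
   wherever they are defined.  Finally invariance of domain turns the continuous injective
   map rho_H on the open octant into a homeomorphism onto its image. *)

datatype 'n expr =
    Const real | Var 'n | Plus "'n expr" "'n expr" | Times "'n expr" "'n expr"
  | Cosh "'n expr" | Sinh "'n expr" | Inverse "'n expr" | Sqrt "'n expr" | Arcosh "'n expr"

primrec eval :: "'n expr \<Rightarrow> real^'n \<Rightarrow> real" where
  "eval (Const c) x = c"
| "eval (Var i) x = x $ i"
| "eval (Plus a b) x = eval a x + eval b x"
| "eval (Times a b) x = eval a x * eval b x"
| "eval (Cosh a) x = cosh (eval a x)"
| "eval (Sinh a) x = sinh (eval a x)"
| "eval (Inverse a) x = inverse (eval a x)"
| "eval (Sqrt a) x = sqrt (eval a x)"
| "eval (Arcosh a) x = arcosh (eval a x)"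

(* The points where every subexpression lies in the open set on which its head function is
   smooth. *)
primrec regular :: "'n expr \<Rightarrow> real^'n \<Rightarrow> bool" where
  "regular (Const c) x = True"
| "regular (Var i) x = True"
| "regular (Plus a b) x = (regular a x \<and> regular b x)"
| "regular (Times a b) x = (regular a x \<and> regular b x)"
| "regular (Cosh a) x = regular a x"
| "regular (Sinh a) x = regular a x"
| "regular (Inverse a) x = (regular a x \<and> eval a x \<noteq> 0)"
| "regular (Sqrt a) x = (regular a x \<and> eval a x > 0)"
| "regular (Arcosh a) x = (regular a x \<and> eval a x > 1)"

primrec sderiv :: "real^'n \<Rightarrow> 'n expr \<Rightarrow> 'n expr" where
  "sderiv v (Const c) = Const 0"
| "sderiv v (Var i) = Const (v $ i)"
| "sderiv v (Plus a b) = Plus (sderiv v a) (sderiv v b)"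
| "sderiv v (Times a b) = Plus (Times (sderiv v a) b) (Times a (sderiv v b))"
| "sderiv v (Cosh a) = Times (Sinh a) (sderiv v a)"
| "sderiv v (Sinh a) = Times (Cosh a) (sderiv v a)"
| "sderiv v (Inverse a) = Times (Const (-1)) (Times (sderiv v a) (Times (Inverse a) (Inverse a)))"
| "sderiv v (Sqrt a) = Times (sderiv v a) (Times (Const (1/2)) (Inverse (Sqrt a)))"
| "sderiv v (Arcosh a) = Times (sderiv v a) (Inverse (Sqrt (Plus (Times a a) (Const (-1)))))"

(* Differentiating keeps an expression regular, since the derivative of each head function is
   built from functions smooth on the same domain. *)
lemma regular_sderiv: "regular e x \<Longrightarrow> regular (sderiv v e) x"
proof (induction e)
  case (Arcosh a)
  then have "eval a x * eval a x > 1" by (simp add: less_1_mult)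
  with Arcosh show ?case by simp
qed auto

(* eval in point-free form, so that the derivative rules for products and compositions
   match the goals produced by induction over expressions. *)
lemma eval_fun:
  "eval (Times a b) = (\<lambda>y. eval a y * eval b y)"
  "eval (Cosh a) = (\<lambda>y. cosh (eval a y))"
  "eval (Sinh a) = (\<lambda>y. sinh (eval a y))"
  "eval (Inverse a) = (\<lambda>y. inverse (eval a y))"
  "eval (Sqrt a) = (\<lambda>y. sqrt (eval a y))"
  "eval (Arcosh a) = (\<lambda>y. arcosh (eval a y))"
  by (simp_all add: fun_eq_iff)

lemma has_derivative_real_compose:
  assumes "(f has_derivative f') (at x)" and "(g has_real_derivative D) (at (f x))"
  shows "((\<lambda>y. g (f y)) has_derivative (\<lambda>v. f' v * D)) (at x)"
  using has_derivative_compose[OF assms(1) assms(2)[unfolded has_field_derivative_def]]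
  by (simp add: mult.commute)

lemma eval_has_derivative:
  "regular e x \<Longrightarrow> (eval e has_derivative (\<lambda>v. eval (sderiv v e) x)) (at x)"
proof (induction e)
  case (Const c)
  then show ?case by simp
next
  case (Var i)
  then show ?case
    using bounded_linear.has_derivative[OF bounded_linear_vec_nth[of i] has_derivative_ident]
    by simp
next
  case (Plus a b)
  then show ?case by (simp add: has_derivative_add)
next
  case (Times a b)
  then have "((\<lambda>y. eval a y * eval b y) has_derivative
      (\<lambda>v. eval a x * eval (sderiv v b) x + eval (sderiv v a) x * eval b x)) (at x)"
    by (intro has_derivative_mult) simp_all
  then show ?case unfolding eval_fun
    by (rule has_derivative_eq_rhs) (simp add: fun_eq_iff)
next
  case (Cosh a)
  then have "((\<lambda>y. cosh (eval a y)) has_derivative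
      (\<lambda>v. eval (sderiv v a) x * sinh (eval a x))) (at x)"
    by (intro has_derivative_real_compose) (auto intro!: derivative_eq_intros)
  then show ?case unfolding eval_fun
    by (rule has_derivative_eq_rhs) (simp add: fun_eq_iff)
next
  case (Sinh a)
  then have "((\<lambda>y. sinh (eval a y)) has_derivative
      (\<lambda>v. eval (sderiv v a) x * cosh (eval a x))) (at x)"
    by (intro has_derivative_real_compose) (auto intro!: derivative_eq_intros)
  then show ?case unfolding eval_fun
    by (rule has_derivative_eq_rhs) (simp add: fun_eq_iff)
next
  case (Inverse a)
  then have "((\<lambda>y. inverse (eval a y)) has_derivative
      (\<lambda>v. eval (sderiv v a) x * (- (inverse (eval a x) ^ Suc (Suc 0))))) (at x)"
    by (intro has_derivative_real_compose[where g = inverse] DERIV_inverse) simp_all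
  then show ?case unfolding eval_fun
    by (rule has_derivative_eq_rhs) (simp add: fun_eq_iff power2_eq_square)
next
  case (Sqrt a)
  then have "((\<lambda>y. sqrt (eval a y)) has_derivative
      (\<lambda>v. eval (sderiv v a) x * (inverse (sqrt (eval a x)) / 2))) (at x)"
    by (intro has_derivative_real_compose[where g = sqrt] DERIV_real_sqrt) simp_all
  then show ?case unfolding eval_fun
    by (rule has_derivative_eq_rhs) (simp add: fun_eq_iff)
next
  case (Arcosh a)
  then have "((\<lambda>y. arcosh (eval a y)) has_derivative
      (\<lambda>v. eval (sderiv v a) x * (1 / sqrt (eval a x ^ 2 - 1)))) (at x)"
    by (intro has_derivative_real_compose[where g = arcosh] arcosh_real_has_field_derivative)
      simp_all
  then show ?case unfolding eval_fun
    by (rule has_derivative_eq_rhs) (simp add: fun_eq_iff power2_eq_square divide_inverse)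
qed

lemma has_derivative_vec_lambda:
  fixes g :: "'n::finite \<Rightarrow> 'a::real_normed_vector \<Rightarrow> real"
  assumes "\<And>i. (g i has_derivative g' i) F"
  shows "((\<lambda>x. \<chi> i. g i x) has_derivative (\<lambda>v. \<chi> i. g' i v)) F"
proof -
  have "((\<lambda>x. \<Sum>i\<in>UNIV. g i x *\<^sub>R axis i 1) has_derivative
      (\<lambda>v. \<Sum>i\<in>UNIV. g' i v *\<^sub>R axis i (1::real))) F"
    by (intro has_derivative_sum has_derivative_scaleR_left assms)
  moreover have "(\<Sum>i\<in>UNIV. h i *\<^sub>R axis i (1::real)) = (\<chi> i. h i)" for h :: "'n \<Rightarrow> real"
    by (simp add: vec_eq_iff axis_def if_distrib cong: if_cong)
  ultimately show ?thesis by simp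
qed

definition eval_vec :: "('m::finite \<Rightarrow> 'n::finite expr) \<Rightarrow> real^'n \<Rightarrow> real^'m" where
  "eval_vec es x = (\<chi> i. eval (es i) x)"

(* Iterated symbolic derivative, matching the order of iter_dderiv (last direction first). *)
primrec sderivs :: "(real^'n) list \<Rightarrow> 'n expr \<Rightarrow> 'n expr" where
  "sderivs [] e = e"
| "sderivs (v # vs) e = sderiv v (sderivs vs e)"

lemma regular_sderivs: "regular e x \<Longrightarrow> regular (sderivs vs e) x"
  by (induction vs) (simp_all add: regular_sderiv)

lemma iter_dderiv_eval_vec:
  assumes S: "open S" and reg: "\<And>i x. x \<in> S \<Longrightarrow> regular (es i) x" and x: "x \<in> S"
  shows "(iter_dderiv vs (eval_vec es) has_derivative
           (\<lambda>v. eval_vec (\<lambda>i. sderiv v (sderivs vs (es i))) x)) (at x)"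
  using x
proof (induction vs arbitrary: x)
  case Nil
  then show ?case
    unfolding eval_vec_def
    by (simp add: has_derivative_vec_lambda eval_has_derivative reg)
next
  case (Cons w vs)
  have eq: "iter_dderiv (w # vs) (eval_vec es) y = eval_vec (\<lambda>i. sderivs (w # vs) (es i)) y"
    if "y \<in> S" for y
    using frechet_derivative_at[OF Cons.IH[OF that], symmetric] by simp
  have "(eval_vec (\<lambda>i. sderivs (w # vs) (es i)) has_derivative
      (\<lambda>v. eval_vec (\<lambda>i. sderiv v (sderivs (w # vs) (es i))) x)) (at x)"
    unfolding eval_vec_def
    by (intro has_derivative_vec_lambda eval_has_derivative regular_sderiv regular_sderivs reg
        Cons.prems)
  then show ?case
    by (rule has_derivative_transform_within_open[OF _ S Cons.prems]) (metis eq)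
qed

lemma smooth_on_eval_vec:
  assumes "open S" and "\<And>i x. x \<in> S \<Longrightarrow> regular (es i) x"
  shows "smooth_on S (eval_vec es)"
  unfolding smooth_on_def differentiable_def
  using iter_dderiv_eval_vec[OF assms(1), of es] assms(2) by blast

(* The combinatorial heart of both injectivity and the immersion property: quantities that
   change sign along every edge of a triangle, an odd cycle, must all vanish. *)
lemma cyclic_sign:
  fixes a b c :: real
  assumes "sgn b = - sgn a" "sgn c = - sgn b" "sgn a = - sgn c"
  shows "a = 0 \<and> b = 0 \<and> c = 0"
proof -
  have "sgn a = 0" "sgn b = 0" "sgn c = 0" using assms by linarith+
  then show ?thesis by (simp add: sgn_0_0)
qed

lemma sgn_opposite_of_linear:
  fixes p q a b :: real
  assumes "0 < p" "0 < q" "p * a + q * b = 0"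
  shows "sgn b = - sgn a"
proof -
  have "q * b = - (p * a)" using assms(3) by linarith
  then have "sgn (q * b) = - sgn (p * a)" by (simp add: sgn_minus)
  then show ?thesis using assms(1,2) by (simp add: sgn_mult)
qed

lemma arcosh_inj_real:
  fixes a b :: real
  assumes "1 \<le> a" "1 \<le> b" "arcosh a = arcosh b"
  shows "a = b"
  by (metis assms cosh_arcosh_real)

(* F_I(a,b) = cosh a cosh b + I sinh a sinh b is the hyperbolic cosine of the distance between
   the centres of two circles of radii a, b with inversive distance I; edge_cosh_d1 is its
   partial derivative in the first argument (by symmetry, edge_cosh_d1 I b a is the other). *)
definition edge_cosh :: "real \<Rightarrow> real \<Rightarrow> real \<Rightarrow> real" where
  "edge_cosh I a b = cosh a * cosh b + I * sinh a * sinh b"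

definition edge_cosh_d1 :: "real \<Rightarrow> real \<Rightarrow> real \<Rightarrow> real" where
  "edge_cosh_d1 I a b = sinh a * cosh b + I * cosh a * sinh b"

(* For positive radii the edge is nondegenerate, so its length arcosh F_I is positive and
   arcosh is smooth there. *)
lemma edge_cosh_gt_1:
  assumes "0 < a" "0 < b" "0 \<le> I"
  shows "1 < edge_cosh I a b"
proof -
  have "1 < cosh a" "1 < cosh b"
    using assms cosh_real_ge_1[of a] cosh_real_ge_1[of b] by (auto simp: order_le_less)
  then have "1 < cosh a * cosh b" by (simp add: less_1_mult)
  moreover have "0 \<le> I * sinh a * sinh b" using assms by simp
  ultimately show ?thesis unfolding edge_cosh_def by linarith
qed

lemma edge_length_pos:
  assumes "0 < a" "0 < b" "0 \<le> I"
  shows "0 < arcosh (edge_cosh I a b)"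
  using edge_cosh_gt_1[OF assms] by simp

lemma edge_cosh_d1_pos:
  assumes "0 < a" "0 < b" "0 \<le> I"
  shows "0 < edge_cosh_d1 I a b"
proof -
  have "0 < sinh a * cosh b" "0 \<le> I * cosh a * sinh b" using assms by simp_all
  then show ?thesis unfolding edge_cosh_d1_def by linarith
qed

(* F_I is strictly increasing in each argument on the closed quadrant, because cosh and sinh
   are nonnegative and increasing there. *)
lemma edge_cosh_strict_mono:
  assumes "0 \<le> a" "0 \<le> b" "a \<le> a'" "b \<le> b'" "a < a' \<or> b < b'" "0 \<le> I"
  shows "edge_cosh I a b < edge_cosh I a' b'"
proof -
  have le: "cosh a \<le> cosh a'" "cosh b \<le> cosh b'"
    using assms by (simp_all add: cosh_real_nonneg_le_iff)
  have "cosh a * cosh b < cosh a' * cosh b'"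
    using assms(5)
  proof
    assume "a < a'"
    then have "cosh a < cosh a'" using assms by (simp add: cosh_real_nonneg_less_iff)
    then have "cosh a * cosh b < cosh a' * cosh b" by simp
    also have "\<dots> \<le> cosh a' * cosh b'" using le by simp
    finally show ?thesis .
  next
    assume "b < b'"
    then have "cosh b < cosh b'" using assms by (simp add: cosh_real_nonneg_less_iff)
    then have "cosh a * cosh b < cosh a * cosh b'" by simp
    also have "\<dots> \<le> cosh a' * cosh b'" using le by simp
    finally show ?thesis .
  qed
  moreover have "sinh a * sinh b \<le> sinh a' * sinh b'"
    using assms by (intro mult_mono) auto
  then have "I * (sinh a * sinh b) \<le> I * (sinh a' * sinh b')"
    using assms by (intro mult_left_mono) auto
  ultimately show ?thesis unfolding edge_cosh_def by (simp add: mult.assoc)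
qed

lemma edge_cosh_level_sign:
  assumes "0 \<le> a" "0 \<le> b" "0 \<le> a'" "0 \<le> b'" "0 \<le> I"
    and "edge_cosh I a b = edge_cosh I a' b'"
  shows "sgn (b' - b) = - sgn (a' - a)"
proof (rule ccontr)
  assume "sgn (b' - b) \<noteq> - sgn (a' - a)"
  then have "(a \<le> a' \<and> b \<le> b' \<and> (a < a' \<or> b < b')) \<or> (a' \<le> a \<and> b' \<le> b \<and> (a' < a \<or> b' < b))"
    by (auto simp: sgn_if split: if_splits)
  then show False
    using edge_cosh_strict_mono[of a b a' b' I] edge_cosh_strict_mono[of a' b' a b I] assms
    by auto
qed

(* The same statement for edge lengths l = arcosh F_I, which determine F_I for positive radii. *)
lemma edge_length_level_sign:
  assumes "0 < a" "0 < b" "0 < a'" "0 < b'" "0 \<le> I"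
    and "arcosh (edge_cosh I a b) = arcosh (edge_cosh I a' b')"
  shows "sgn (b' - b) = - sgn (a' - a)"
proof (rule edge_cosh_level_sign)
  show "edge_cosh I a b = edge_cosh I a' b'"
    using arcosh_inj_real edge_cosh_gt_1 assms by (meson less_imp_le)
qed (use assms in simp_all)

(* The edge length arcosh F_I(x_i, x_j) as an expression, with its directional derivative
   (P v_i + Q v_j) / sinh l, where P, Q are the partial derivatives of F_I. *)
definition edge_expr :: "real \<Rightarrow> 'n \<Rightarrow> 'n \<Rightarrow> 'n expr" where
  "edge_expr I i j =
     Arcosh (Plus (Times (Cosh (Var i)) (Cosh (Var j))) (Times (Times (Const I) (Sinh (Var i))) (Sinh (Var j))))"

lemma eval_edge_expr: "eval (edge_expr I i j) x = arcosh (edge_cosh I (x $ i) (x $ j))"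
  by (simp add: edge_expr_def edge_cosh_def)

lemma regular_edge_expr:
  "0 < x $ i \<Longrightarrow> 0 < x $ j \<Longrightarrow> 0 \<le> I \<Longrightarrow> regular (edge_expr I i j) x"
  using edge_cosh_gt_1 by (simp add: edge_expr_def edge_cosh_def)

lemma eval_sderiv_edge_expr:
  "eval (sderiv v (edge_expr I i j)) x =
     (edge_cosh_d1 I (x $ i) (x $ j) * v $ i + edge_cosh_d1 I (x $ j) (x $ i) * v $ j)
     / sqrt (edge_cosh I (x $ i) (x $ j) * edge_cosh I (x $ i) (x $ j) - 1)"
  by (simp add: edge_expr_def edge_cosh_def edge_cosh_d1_def algebra_simps divide_inverse)

lemma sderiv_edge_expr_zero:
  assumes "eval (sderiv v (edge_expr I i j)) x = 0" "0 < x $ i" "0 < x $ j" "0 \<le> I"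
  shows "sgn (v $ j) = - sgn (v $ i)"
proof -
  have "1 < edge_cosh I (x $ i) (x $ j)" using edge_cosh_gt_1 assms(2-4) .
  then have "0 < sqrt (edge_cosh I (x $ i) (x $ j) * edge_cosh I (x $ i) (x $ j) - 1)"
    by (simp add: less_1_mult)
  then have "edge_cosh_d1 I (x $ i) (x $ j) * v $ i + edge_cosh_d1 I (x $ j) (x $ i) * v $ j = 0"
    using assms(1) unfolding eval_sderiv_edge_expr by simp
  then show ?thesis
    using sgn_opposite_of_linear edge_cosh_d1_pos assms(2-4) by blast
qed

lemma pos3_iff: "x \<in> pos3 \<longleftrightarrow> 0 < x $ 1 \<and> 0 < x $ 2 \<and> 0 < x $ 3"
  by (simp add: pos3_def forall_3)

lemma open_pos3: "open pos3"
proof -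
  have "pos3 = {x. 0 < x $ 1} \<inter> {x. 0 < x $ 2} \<inter> {x :: real^3. 0 < x $ 3}"
    by (auto simp: pos3_iff)
  moreover have "open {x :: real^3. 0 < x $ i}" for i
    by (intro open_Collect_less continuous_intros)
  ultimately show ?thesis by (metis open_Int)
qed

lemma rhoH_components:
  "rhoH Iij Ijk Iki r $ 1 = arcosh (edge_cosh Iij (r $ 1) (r $ 2))"
  "rhoH Iij Ijk Iki r $ 2 = arcosh (edge_cosh Ijk (r $ 2) (r $ 3))"
  "rhoH Iij Ijk Iki r $ 3 = arcosh (edge_cosh Iki (r $ 3) (r $ 1))"
  by (simp_all add: rhoH_def edge_cosh_def)

definition rho_exprs :: "real \<Rightarrow> real \<Rightarrow> real \<Rightarrow> 3 \<Rightarrow> 3 expr" where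
  "rho_exprs Iij Ijk Iki k =
     (if k = 1 then edge_expr Iij 1 2 else if k = 2 then edge_expr Ijk 2 3 else edge_expr Iki 3 1)"

lemma rhoH_eq_eval_vec: "rhoH Iij Ijk Iki = eval_vec (rho_exprs Iij Ijk Iki)"
  by (simp add: fun_eq_iff vec_eq_iff forall_3 eval_vec_def rho_exprs_def eval_edge_expr
      rhoH_components)

lemma regular_rho_exprs:
  "x \<in> pos3 \<Longrightarrow> 0 \<le> Iij \<Longrightarrow> 0 \<le> Ijk \<Longrightarrow> 0 \<le> Iki \<Longrightarrow> regular (rho_exprs Iij Ijk Iki k) x"
  by (simp add: rho_exprs_def pos3_iff regular_edge_expr)

lemma rhoH_maps_pos3:
  assumes "0 \<le> Iij" "0 \<le> Ijk" "0 \<le> Iki"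
  shows "rhoH Iij Ijk Iki ` pos3 \<subseteq> pos3"
  using assms by (auto simp: pos3_iff rhoH_components edge_length_pos)

(* Equal images force opposite sign changes of the radii along all three edges. *)
lemma inj_on_rhoH:
  assumes "0 \<le> Iij" "0 \<le> Ijk" "0 \<le> Iki"
  shows "inj_on (rhoH Iij Ijk Iki) pos3"
proof (rule inj_onI)
  fix x y assume x: "x \<in> pos3" and y: "y \<in> pos3" and eq: "rhoH Iij Ijk Iki x = rhoH Iij Ijk Iki y"
  have x_pos: "0 < x $ 1" "0 < x $ 2" "0 < x $ 3" and y_pos: "0 < y $ 1" "0 < y $ 2" "0 < y $ 3"
    using x y by (simp_all add: pos3_iff)
  have "rhoH Iij Ijk Iki x $ k = rhoH Iij Ijk Iki y $ k" for k
    using eq by simp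
  note same_length = this[of 1, unfolded rhoH_components] this[of 2, unfolded rhoH_components]
    this[of 3, unfolded rhoH_components]
  have "sgn (y $ 2 - x $ 2) = - sgn (y $ 1 - x $ 1)"
    by (rule edge_length_level_sign[OF x_pos(1,2) y_pos(1,2) assms(1) same_length(1)])
  moreover have "sgn (y $ 3 - x $ 3) = - sgn (y $ 2 - x $ 2)"
    by (rule edge_length_level_sign[OF x_pos(2,3) y_pos(2,3) assms(2) same_length(2)])
  moreover have "sgn (y $ 1 - x $ 1) = - sgn (y $ 3 - x $ 3)"
    by (rule edge_length_level_sign[OF x_pos(3,1) y_pos(3,1) assms(3) same_length(3)])
  ultimately have "y $ 1 - x $ 1 = 0 \<and> y $ 2 - x $ 2 = 0 \<and> y $ 3 - x $ 3 = 0"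
    by (rule cyclic_sign)
  then show "x = y" by (simp add: vec_eq_iff forall_3)
qed

lemma rhoH_has_derivative:
  assumes "0 \<le> Iij" "0 \<le> Ijk" "0 \<le> Iki" "x \<in> pos3"
  shows "(rhoH Iij Ijk Iki has_derivative
           (\<lambda>v. eval_vec (\<lambda>k. sderiv v (rho_exprs Iij Ijk Iki k)) x)) (at x)"
  using iter_dderiv_eval_vec[OF open_pos3 regular_rho_exprs, where vs = "[]"] assms
  by (simp add: rhoH_eq_eval_vec)

(* rho_H is an immersion: a tangent vector killed by its differential has components of
   opposite signs along every edge, hence vanishes. *)
lemma rhoH_immersion:
  assumes "0 \<le> Iij" "0 \<le> Ijk" "0 \<le> Iki" "x \<in> pos3"
  shows "inj (frechet_derivative (rhoH Iij Ijk Iki) (at x))"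
proof -
  let ?L = "\<lambda>v. eval_vec (\<lambda>k. sderiv v (rho_exprs Iij Ijk Iki k)) x"
  note D = rhoH_has_derivative[OF assms]
  have x_pos: "0 < x $ 1" "0 < x $ 2" "0 < x $ 3"
    using assms(4) by (simp_all add: pos3_iff)
  have "v = 0" if "?L v = 0" for v
  proof -
    have component: "?L v $ k = 0" for k
      using that by simp
    have zero: "eval (sderiv v (edge_expr Iij 1 2)) x = 0"
      "eval (sderiv v (edge_expr Ijk 2 3)) x = 0"
      "eval (sderiv v (edge_expr Iki 3 1)) x = 0"
      using component[of 1] component[of 2] component[of 3]
      by (simp_all add: eval_vec_def rho_exprs_def)
    have "sgn (v $ 2) = - sgn (v $ 1)"
      by (rule sderiv_edge_expr_zero[OF zero(1) x_pos(1,2) assms(1)])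
    moreover have "sgn (v $ 3) = - sgn (v $ 2)"
      by (rule sderiv_edge_expr_zero[OF zero(2) x_pos(2,3) assms(2)])
    moreover have "sgn (v $ 1) = - sgn (v $ 3)"
      by (rule sderiv_edge_expr_zero[OF zero(3) x_pos(3,1) assms(3)])
    ultimately have "v $ 1 = 0 \<and> v $ 2 = 0 \<and> v $ 3 = 0"
      by (rule cyclic_sign)
    then show "v = 0" by (simp add: vec_eq_iff forall_3)
  qed
  then show ?thesis
    unfolding frechet_derivative_at[OF D, symmetric] linear_injective_0[OF has_derivative_linear[OF D]]
    by blast
qed

theorem mainTheorem7:
  fixes Iij Ijk Iki :: real
  assumes "0 \<le> Iij" and "0 \<le> Ijk" and "0 \<le> Iki"
  shows "rhoH Iij Ijk Iki ` pos3 \<subseteq> pos3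
       \<and> inj_on (rhoH Iij Ijk Iki) pos3
       \<and> smooth_embedding pos3 (rhoH Iij Ijk Iki)"
proof -
  let ?rho = "rhoH Iij Ijk Iki"
  have smooth: "smooth_on pos3 ?rho"
    unfolding rhoH_eq_eval_vec
    by (rule smooth_on_eval_vec[OF open_pos3 regular_rho_exprs[OF _ assms]])
  have "continuous_on pos3 ?rho"
    by (intro continuous_at_imp_continuous_on ballI
        has_derivative_continuous[OF rhoH_has_derivative[OF assms]])
  then obtain g where "homeomorphism pos3 (?rho ` pos3) ?rho g"
    using invariance_of_domain_homeomorphism[OF open_pos3 _ _ inj_on_rhoH[OF assms]] by auto
  then have "smooth_embedding pos3 ?rho"
    unfolding smooth_embedding_def using open_pos3 smooth rhoH_immersion[OF assms] by blast
  then show ?thesis using rhoH_maps_pos3[OF assms] inj_on_rhoH[OF assms] by blast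
qed

end
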